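(* Every binary network that admits an HGT-consistent labelling is orchard.
   Context: A (directed phylogenetic) network on a finite taxa set $X$ is a directed acyclic graph without parallel arcs whose nodes are of the following types: a unique root (indegree 0, outdegree 1); tree nodes (indegree 1, outdegree at least 2); reticulations (indegree at least 2, outdegree 1); leaves (indegree 1, outdegree 0), the leaves being bijectively labelled by $X$. Non-leaf nodes are called internal. A network is binary if every tree node and every reticulation has total degree (indegree plus outdegree) exactly 3. A tree is a network without reticulations. Orchard networks: An ordered pair of leaves $(x,y)$ is a cherry if $x$ and $y$ have a common parent; it is a reticulated cherry if the parent $p_x$ of $x$ is a reticulation and $p_x$ and $y$ have a common parent. Let $p_x,p_y$ be the parents of $x,y$. Reducing $(x,y)$ in a network $N$: if $(x,y)$ is a cherry, delete $x$ and suppress $p_x$ if it now has indegree 1 and outdegree 1; if $(x,y)$ is a reticulated cherry, delete the arc $(p_y,p_x)$ and suppress any resulting node of indegree 1 and outdegree 1; otherwise do nothing. (Suppressing a node $v$ with one parent $u$ and one child $w$ means deleting $v$ and adding the arc $(u,w)$.) For a sequence $S$ of ordered pairs, $NS$ denotes the result of reducing the pairs of $S$ in order. $N$ is orchard if there is a sequence $S$ such that $NS$ is a tree with exactly one leaf. HGT-consistent labelling: Let $N$ be a binary network with node set $V$. An HGT-consistent labelling of $N$ is a map $t:V\to\mathbb{R}$ such that (1) for every arc $(u,v)$, $t(u)\le t(v)$, and equality is allowed only if $v$ is a reticulation; (2) every internal node $u$ has a child $v$ with $t(u)<t(v)$; (3) for every reticulation $r$ with parents $u$ and $v$, exactly one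 of $t(u)=t(r)$ and $t(v)=t(r)$ holds. *)

theory Defs
  imports Complex_Main
begin

text \<open>A directed graph is given by a node set V and an arc set A (a set of pairs,
so there are no parallel arcs). Leaves are identified with their (unique) labels,
so the taxa set X is the set of leaves.\<close>

type_synonym 'a graph = "'a set \<times> ('a \<times> 'a) set"

definition parents :: "('a \<times> 'a) set \<Rightarrow> 'a \<Rightarrow> 'a set" where
  "parents A v = {u. (u, v) \<in> A}"

definition children :: "('a \<times> 'a) set \<Rightarrow> 'a \<Rightarrow> 'a set" where
  "children A v = {w. (v, w) \<in> A}"

definition indeg :: "('a \<times> 'a) set \<Rightarrow> 'a \<Rightarrow> nat" where
  "indeg A v = card (parents A v)"

definition outdeg :: "('a \<times> 'a) set \<Rightarrow> 'a \<Rightarrow> nat" where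
  "outdeg A v = card (children A v)"

definition is_root :: "'a graph \<Rightarrow> 'a \<Rightarrow> bool" where
  "is_root N v \<longleftrightarrow> v \<in> fst N \<and> indeg (snd N) v = 0 \<and> outdeg (snd N) v = 1"

definition is_tree_node :: "'a graph \<Rightarrow> 'a \<Rightarrow> bool" where
  "is_tree_node N v \<longleftrightarrow> v \<in> fst N \<and> indeg (snd N) v = 1 \<and> outdeg (snd N) v \<ge> 2"

definition is_reticulation :: "'a graph \<Rightarrow> 'a \<Rightarrow> bool" where
  "is_reticulation N v \<longleftrightarrow> v \<in> fst N \<and> indeg (snd N) v \<ge> 2 \<and> outdeg (snd N) v = 1"

definition is_leaf :: "'a graph \<Rightarrow> 'a \<Rightarrow> bool" where
  "is_leaf N v \<longleftrightarrow> v \<in> fst N \<and> indeg (snd N) v = 1 \<and> outdeg (snd N) v = 0"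

definition leaves :: "'a graph \<Rightarrow> 'a set" where
  "leaves N = {v. is_leaf N v}"

definition is_network :: "'a graph \<Rightarrow> bool" where
  "is_network N \<longleftrightarrow>
     finite (fst N) \<and> snd N \<subseteq> fst N \<times> fst N \<and> acyclic (snd N) \<and>
     (\<exists>!r. is_root N r) \<and>
     (\<forall>v \<in> fst N. is_root N v \<or> is_tree_node N v \<or> is_reticulation N v \<or> is_leaf N v)"

definition is_binary :: "'a graph \<Rightarrow> bool" where
  "is_binary N \<longleftrightarrow> is_network N \<and>
     (\<forall>v. (is_tree_node N v \<or> is_reticulation N v) \<longrightarrow>
           indeg (snd N) v + outdeg (snd N) v = 3)"

definition is_tree :: "'a graph \<Rightarrow> bool" where
  "is_tree N \<longleftrightarrow> is_network N \<and> (\<forall>v. \<not> is_reticulation N v)"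

text \<open>The unique parent of a leaf (or of a node with indegree one).\<close>
definition par :: "'a graph \<Rightarrow> 'a \<Rightarrow> 'a" where
  "par N v = (THE u. (u, v) \<in> snd N)"

definition suppress :: "'a \<Rightarrow> 'a graph \<Rightarrow> 'a graph" where
  "suppress v N =
     (let A = snd N; u = (THE u. (u, v) \<in> A); w = (THE w. (v, w) \<in> A)
      in (fst N - {v}, (A - {(u, v), (v, w)}) \<union> {(u, w)}))"

definition suppress_if :: "'a \<Rightarrow> 'a graph \<Rightarrow> 'a graph" where
  "suppress_if v N =
     (if v \<in> fst N \<and> indeg (snd N) v = 1 \<and> outdeg (snd N) v = 1 then suppress v N else N)"

definition is_cherry :: "'a graph \<Rightarrow> 'a \<Rightarrow> 'a \<Rightarrow> bool" where
  "is_cherry N x y \<longleftrightarrow> x \<noteq> y \<and> is_leaf N x \<and> is_leaf N y \<and>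
     (\<exists>p. (p, x) \<in> snd N \<and> (p, y) \<in> snd N)"

definition is_ret_cherry :: "'a graph \<Rightarrow> 'a \<Rightarrow> 'a \<Rightarrow> bool" where
  "is_ret_cherry N x y \<longleftrightarrow> x \<noteq> y \<and> is_leaf N x \<and> is_leaf N y \<and>
     is_reticulation N (par N x) \<and>
     (\<exists>p. (p, par N x) \<in> snd N \<and> (p, y) \<in> snd N)"

definition reduce_pair :: "'a graph \<Rightarrow> 'a \<times> 'a \<Rightarrow> 'a graph" where
  "reduce_pair N xy =
     (let x = fst xy; y = snd xy; px = par N x; py = par N y in
      if is_cherry N x y then
        suppress_if px (fst N - {x}, snd N - {(px, x)})
      else if is_ret_cherry N x y then
        suppress_if px (suppress_if py (fst N, snd N - {(py, px)}))
      else N)"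

definition reduce_seq :: "'a graph \<Rightarrow> ('a \<times> 'a) list \<Rightarrow> 'a graph" where
  "reduce_seq N S = foldl reduce_pair N S"

definition orchard :: "'a graph \<Rightarrow> bool" where
  "orchard N \<longleftrightarrow> (\<exists>S. is_tree (reduce_seq N S) \<and> card (leaves (reduce_seq N S)) = 1)"

definition internal :: "'a graph \<Rightarrow> 'a \<Rightarrow> bool" where
  "internal N v \<longleftrightarrow> v \<in> fst N \<and> \<not> is_leaf N v"

definition hgt_consistent :: "'a graph \<Rightarrow> ('a \<Rightarrow> real) \<Rightarrow> bool" where
  "hgt_consistent N t \<longleftrightarrow>
     (\<forall>(u, v) \<in> snd N. t u \<le> t v \<and> (t u = t v \<longrightarrow> is_reticulation N v)) \<and>
     (\<forall>u. internal N u \<longrightarrow> (\<exists>v. (u, v) \<in> snd N \<and> t u < t v)) \<and>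
     (\<forall>r u v. is_reticulation N r \<and> u \<noteq> v \<and> (u, r) \<in> snd N \<and> (v, r) \<in> snd N \<longrightarrow>
        ((t u = t r) \<noteq> (t v = t r)))"

end

theory Submission
  imports Defs
begin

text \<open>Induct on the number of nodes. A non-root internal node \<open>v\<close> of maximal label has only
  leaves among its strictly later children. If \<open>v\<close> is a tree node whose other child is not a leaf,
  that child has the label of \<open>v\<close> and is therefore a reticulation. At a reticulation \<open>r\<close> whose
  strictly later nodes are leaves, the child \<open>x\<close> of \<open>r\<close> is a leaf, some parent \<open>z\<close> of \<open>r\<close> has
  the label of \<open>r\<close>, and the strictly later child \<open>y\<close> of \<open>z\<close> is a leaf: \<open>(x, y)\<close> is a
  reticulated cherry. So a cherry or a reticulated cherry always exists. Reducing it deletes a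
  set of nodes and redirects each arc entering that set to a leaf strictly later than the
  deleted head; hence the same labelling remains HGT-consistent on the smaller binary network.\<close>

lemma mem_parents [simp]: "u \<in> parents A v \<longleftrightarrow> (u, v) \<in> A"
  by (simp add: parents_def)

lemma mem_children [simp]: "w \<in> children A v \<longleftrightarrow> (v, w) \<in> A"
  by (simp add: children_def)

lemma arc_into_iff: "parents A v = P \<Longrightarrow> (u, v) \<in> A \<longleftrightarrow> u \<in> P"
  by auto

lemma arc_from_iff: "children A v = C \<Longrightarrow> (v, w) \<in> A \<longleftrightarrow> w \<in> C"
  by auto

lemma card_1_eq_singleton: "card S = 1 \<Longrightarrow> a \<in> S \<Longrightarrow> S = {a}"
  by (metis card_1_singletonE singletonD)

lemma card_2_eq_doubleton: "card S = 2 \<Longrightarrow> a \<in> S \<Longrightarrow> b \<in> S \<Longrightarrow> a \<noteq> b \<Longrightarrow> S = {a, b}"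
  unfolding card_2_iff by auto

lemma par_eq:
  assumes "parents A x = {p}"
  shows "par (V, A) x = p"
  using assms unfolding par_def set_eq_iff by simp

lemma suppress_if_eq:
  assumes "v \<in> V" and "parents A v = {u}" and "children A v = {w}"
  shows "suppress_if v (V, A) = (V - {v}, A - {(u, v), (v, w)} \<union> {(u, w)})"
proof -
  have "(THE u'. (u', v) \<in> A) = u" "(THE w'. (v, w') \<in> A) = w"
    using assms(2,3) unfolding set_eq_iff by simp_all
  with assms show ?thesis
    by (simp add: suppress_if_def suppress_def indeg_def outdeg_def Let_def)
qed

lemma orchard_if_reduce_pair_orchard:
  assumes "orchard (reduce_pair N xy)"
  shows "orchard N"
proof -
  obtain S where "is_tree (reduce_seq (reduce_pair N xy) S)"
    and "card (leaves (reduce_seq (reduce_pair N xy) S)) = 1"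
    using assms unfolding orchard_def by blast
  moreover have "reduce_seq N (xy # S) = reduce_seq (reduce_pair N xy) S"
    by (simp add: reduce_seq_def)
  ultimately show ?thesis
    unfolding orchard_def by metis
qed

lemma degree_preserving_node_types:
  assumes "V' \<subseteq> V"
    and "\<And>v. v \<in> V' \<Longrightarrow> indeg A' v = indeg A v \<and> outdeg A' v = outdeg A v"
  shows "is_root (V', A') v \<longleftrightarrow> v \<in> V' \<and> is_root (V, A) v"
    and "is_tree_node (V', A') v \<longleftrightarrow> v \<in> V' \<and> is_tree_node (V, A) v"
    and "is_reticulation (V', A') v \<longleftrightarrow> v \<in> V' \<and> is_reticulation (V, A) v"
    and "is_leaf (V', A') v \<longleftrightarrow> v \<in> V' \<and> is_leaf (V, A) v"
  using assms
  by (auto simp: is_root_def is_tree_node_def is_reticulation_def is_leaf_def)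

locale binary_network =
  fixes V :: "'a set" and A :: "('a \<times> 'a) set"
  assumes binary: "is_binary (V, A)"
begin

lemma network: "is_network (V, A)"
  using binary by (simp add: is_binary_def)

lemma finite_nodes: "finite V"
  and arcs_subset: "A \<subseteq> V \<times> V"
  and acyclic_arcs: "acyclic A"
  using network by (simp_all add: is_network_def)

lemma arc_source: "(u, v) \<in> A \<Longrightarrow> u \<in> V"
  and arc_target: "(u, v) \<in> A \<Longrightarrow> v \<in> V"
  using arcs_subset by auto

lemma no_self_arc: "(v, v) \<notin> A"
  using acyclic_arcs unfolding acyclic_def by blast

lemma finite_parents: "finite (parents A v)"
  by (rule finite_subset[OF _ finite_nodes]) (auto intro: arc_source)

lemma finite_children: "finite (children A v)"
  by (rule finite_subset[OF _ finite_nodes]) (auto intro: arc_target)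

lemma node_degrees:
  assumes "v \<in> V"
  shows "(indeg A v = 0 \<and> outdeg A v = 1) \<or> (indeg A v = 1 \<and> outdeg A v = 2)
       \<or> (indeg A v = 2 \<and> outdeg A v = 1) \<or> (indeg A v = 1 \<and> outdeg A v = 0)"
proof -
  have "is_root (V, A) v \<or> is_tree_node (V, A) v \<or> is_reticulation (V, A) v \<or> is_leaf (V, A) v"
    using network assms by (simp add: is_network_def)
  moreover have "is_tree_node (V, A) v \<or> is_reticulation (V, A) v \<Longrightarrow>
      indeg A v + outdeg A v = 3"
    using binary unfolding is_binary_def snd_conv by blast
  ultimately show ?thesis
    by (auto simp: is_root_def is_tree_node_def is_reticulation_def is_leaf_def)
qed

lemma root_exists: "\<exists>r. is_root (V, A) r"
  using network by (auto simp: is_network_def)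

lemma root_unique: "is_root (V, A) r \<Longrightarrow> is_root (V, A) r' \<Longrightarrow> r = r'"
  using network by (auto simp: is_network_def)

lemma leaf_no_child: "is_leaf (V, A) x \<Longrightarrow> (x, w) \<notin> A"
  using finite_children[of x] by (auto simp: is_leaf_def outdeg_def)

lemma root_no_parent: "is_root (V, A) r \<Longrightarrow> (u, r) \<notin> A"
  using finite_parents[of r] by (auto simp: is_root_def indeg_def)

lemma leaf_parents:
  assumes "is_leaf (V, A) x" and "(p, x) \<in> A"
  shows "parents A x = {p}"
  using assms card_1_eq_singleton[of "parents A x" p] by (simp add: is_leaf_def indeg_def)

lemma two_children_node:
  assumes "(p, x) \<in> A" and "(p, y) \<in> A" and "x \<noteq> y"
  shows "children A p = {x, y}" and "\<exists>g. parents A p = {g}"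
proof -
  have "card {x, y} \<le> outdeg A p"
    unfolding outdeg_def using assms by (intro card_mono[OF finite_children]) auto
  then have "indeg A p = 1" and "outdeg A p = 2"
    using node_degrees[OF arc_source[OF assms(1)]] assms(3) by auto
  then show "children A p = {x, y}" and "\<exists>g. parents A p = {g}"
    using assms card_2_eq_doubleton[of "children A p" x y]
    by (simp_all add: indeg_def outdeg_def card_1_singleton_iff)
qed

lemma reticulation_arcs:
  assumes "is_reticulation (V, A) r"
  shows "\<exists>c. children A r = {c}" and "\<exists>a b. a \<noteq> b \<and> parents A r = {a, b}"
proof -
  have "r \<in> V" and "outdeg A r = 1" and "indeg A r \<ge> 2"
    using assms by (auto simp: is_reticulation_def)
  then have "outdeg A r = 1" and "indeg A r = 2"
    using node_degrees[of r] by auto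
  then show "\<exists>c. children A r = {c}" and "\<exists>a b. a \<noteq> b \<and> parents A r = {a, b}"
    by (simp_all add: indeg_def outdeg_def card_1_singleton_iff card_2_iff) blast
qed

lemma orchard_if_internal_only_root:
  assumes "\<forall>u \<in> V. internal (V, A) u \<longrightarrow> is_root (V, A) u"
  shows "orchard (V, A)"
proof -
  obtain r where r: "is_root (V, A) r"
    using root_exists by blast
  then obtain x where x: "children A r = {x}"
    by (auto simp: is_root_def outdeg_def card_1_singleton_iff)
  have no_reticulation: "\<not> is_reticulation (V, A) v" for v
    using assms by (auto simp: is_reticulation_def internal_def is_leaf_def is_root_def)
  have "is_leaf (V, A) z \<longleftrightarrow> z = x" for z
  proof
    assume "is_leaf (V, A) z"
    then obtain w where "parents A z = {w}"
      by (auto simp: is_leaf_def indeg_def card_1_singleton_iff)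
    then have wz: "(w, z) \<in> A"
      by auto
    then have "is_root (V, A) w"
      using assms arc_source[OF wz] leaf_no_child[of w z] by (auto simp: internal_def)
    with wz r x show "z = x"
      using root_unique by (metis mem_children singletonD)
  next
    assume "z = x"
    have "(r, x) \<in> A"
      using x by auto
    then have "x \<in> V" "\<not> is_root (V, A) x"
      using arc_target root_no_parent by blast+
    with \<open>z = x\<close> show "is_leaf (V, A) z"
      using assms by (auto simp: internal_def)
  qed
  then have "leaves (V, A) = {x}"
    by (auto simp: leaves_def)
  then have "is_tree (reduce_seq (V, A) []) \<and> card (leaves (reduce_seq (V, A) [])) = 1"
    using network no_reticulation by (simp add: reduce_seq_def is_tree_def)
  then show ?thesis
    unfolding orchard_def by blast
qed

lemma binary_if_degree_preserving:
  assumes sub: "V' \<subseteq> V" and arcs: "A' \<subseteq> V' \<times> V'" and paths: "A' \<subseteq> A\<^sup>+"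
    and deg: "\<And>v. v \<in> V' \<Longrightarrow> indeg A' v = indeg A v \<and> outdeg A' v = outdeg A v"
    and root: "\<exists>r \<in> V'. is_root (V, A) r"
  shows "is_binary (V', A')"
proof -
  note types = degree_preserving_node_types[OF sub deg]
  have "finite V'"
    using finite_nodes sub by (rule finite_subset[rotated])
  moreover have "acyclic A'"
    using acyclic_subset[OF _ paths] acyclic_arcs by (simp add: acyclic_def)
  moreover have "\<exists>!r. is_root (V', A') r"
    using root root_unique by (auto simp: types)
  moreover have "\<forall>v \<in> V'. is_root (V', A') v \<or> is_tree_node (V', A') v
      \<or> is_reticulation (V', A') v \<or> is_leaf (V', A') v"
    using network sub by (auto simp: types is_network_def)
  ultimately have "is_network (V', A')"
    using arcs by (simp add: is_network_def)
  with binary deg show ?thesis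
    by (auto simp: is_binary_def types)
qed

end

locale hgt_network = binary_network +
  fixes t :: "'a \<Rightarrow> real"
  assumes hgt: "hgt_consistent (V, A) t"
begin

lemma label_mono: "(u, v) \<in> A \<Longrightarrow> t u \<le> t v"
  and label_eq_reticulation: "(u, v) \<in> A \<Longrightarrow> t u = t v \<Longrightarrow> is_reticulation (V, A) v"
  and internal_later_child: "internal (V, A) u \<Longrightarrow> \<exists>v. (u, v) \<in> A \<and> t u < t v"
  using hgt unfolding hgt_consistent_def by auto

lemma label_less_leaf: "(u, x) \<in> A \<Longrightarrow> is_leaf (V, A) x \<Longrightarrow> t u < t x"
  using label_mono label_eq_reticulation
  by (fastforce simp: is_leaf_def is_reticulation_def)

lemma reticulation_parent_same_label:
  assumes "is_reticulation (V, A) r"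
  shows "\<exists>z. (z, r) \<in> A \<and> t z = t r"
proof -
  obtain a b where "a \<noteq> b" "parents A r = {a, b}"
    using reticulation_arcs(2)[OF assms] by blast
  then have "(a, r) \<in> A" "(b, r) \<in> A"
    by auto
  with \<open>a \<noteq> b\<close> have "(t a = t r) \<noteq> (t b = t r)"
    using hgt assms unfolding hgt_consistent_def snd_conv by blast
  with \<open>(a, r) \<in> A\<close> \<open>(b, r) \<in> A\<close> show ?thesis
    by blast
qed

lemma reticulated_cherry_exists:
  assumes ret: "is_reticulation (V, A) r"
    and later_leaf: "\<And>u w. (u, w) \<in> A \<Longrightarrow> t r < t w \<Longrightarrow> is_leaf (V, A) w"
  shows "\<exists>x y. is_ret_cherry (V, A) x y"
proof -
  have "internal (V, A) r"
    using ret by (auto simp: internal_def is_reticulation_def is_leaf_def)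
  then obtain x where rx: "(r, x) \<in> A" and "t r < t x"
    using internal_later_child by blast
  then have x: "is_leaf (V, A) x"
    using later_leaf by blast
  then have par_x: "par (V, A) x = r"
    using rx by (simp add: leaf_parents par_eq)
  obtain z where zr: "(z, r) \<in> A" and tz: "t z = t r"
    using reticulation_parent_same_label[OF ret] by blast
  then have "internal (V, A) z"
    using arc_source leaf_no_child by (auto simp: internal_def)
  then obtain y where zy: "(z, y) \<in> A" and "t z < t y"
    using internal_later_child by blast
  then have y: "is_leaf (V, A) y"
    using later_leaf tz by auto
  have "x \<noteq> y"
    using leaf_parents[OF x rx] zy zr no_self_arc by (metis mem_parents singletonD)
  then have "is_ret_cherry (V, A) x y"
    using x y ret zr zy by (auto simp: is_ret_cherry_def par_x)
  then show ?thesis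
    by blast
qed

lemma highest_non_root_internal_node:
  assumes "\<exists>u \<in> V. internal (V, A) u \<and> \<not> is_root (V, A) u"
  obtains v where "v \<in> V" "internal (V, A) v" "\<not> is_root (V, A) v"
    and "\<And>u w. (u, w) \<in> A \<Longrightarrow> t v < t w \<Longrightarrow> is_leaf (V, A) w"
proof -
  define I where "I = {u \<in> V. internal (V, A) u \<and> \<not> is_root (V, A) u}"
  have "finite I" "I \<noteq> {}"
    using finite_nodes assms unfolding I_def by auto
  then have "Max (t ` I) \<in> t ` I"
    by simp
  then obtain v where v: "v \<in> I" and "t v = Max (t ` I)"
    by auto
  then have max: "t u \<le> t v" if "u \<in> I" for u
    using \<open>finite I\<close> that by simp
  have "is_leaf (V, A) w" if "(u, w) \<in> A" "t v < t w" for u w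
    using that max[of w] arc_target root_no_parent by (force simp: I_def internal_def)
  with v that show ?thesis
    unfolding I_def by blast
qed

lemma reducible_pair_exists:
  assumes "\<exists>u \<in> V. internal (V, A) u \<and> \<not> is_root (V, A) u"
  shows "\<exists>x y. is_cherry (V, A) x y \<or> is_ret_cherry (V, A) x y"
proof -
  obtain v where v: "v \<in> V" "internal (V, A) v" "\<not> is_root (V, A) v"
    and later_leaf: "\<And>u w. (u, w) \<in> A \<Longrightarrow> t v < t w \<Longrightarrow> is_leaf (V, A) w"
    using highest_non_root_internal_node[OF assms] by blast
  show ?thesis
  proof (cases "is_reticulation (V, A) v")
    case True
    then show ?thesis
      using reticulated_cherry_exists later_leaf by blast
  next
    case False
    obtain y where vy: "(v, y) \<in> A" and "t v < t y"
      using internal_later_child v(2) by blast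
    then have y: "is_leaf (V, A) y"
      using later_leaf by blast
    have "outdeg A v = 2"
      using node_degrees[OF v(1)] v False
      by (auto simp: is_reticulation_def is_root_def internal_def is_leaf_def)
    then obtain c where vc: "(v, c) \<in> A" and "c \<noteq> y"
      using vy unfolding outdeg_def card_2_iff by (metis insertCI mem_children)
    show ?thesis
    proof (cases "is_leaf (V, A) c")
      case True
      then have "is_cherry (V, A) c y"
        using y vc vy \<open>c \<noteq> y\<close> by (auto simp: is_cherry_def)
      then show ?thesis by blast
    next
      case False
      then have "t c = t v"
        using later_leaf[OF vc] label_mono[OF vc] by fastforce
      then have "is_reticulation (V, A) c"
        using label_eq_reticulation[OF vc] by simp
      with later_leaf \<open>t c = t v\<close> show ?thesis
        using reticulated_cherry_exists by metis
    qed
  qed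
qed

lemma hgt_consistent_if_degree_preserving:
  assumes sub: "V' \<subseteq> V" and arcs: "A' \<subseteq> V' \<times> V'"
    and deg: "\<And>v. v \<in> V' \<Longrightarrow> indeg A' v = indeg A v \<and> outdeg A' v = outdeg A v"
    and new: "\<And>u w. (u, w) \<in> A' \<Longrightarrow> (u, w) \<notin> A \<Longrightarrow>
      t u < t w \<and> \<not> is_reticulation (V, A) w"
    and lost: "\<And>u w. u \<in> V' \<Longrightarrow> (u, w) \<in> A \<Longrightarrow> (u, w) \<notin> A' \<Longrightarrow>
      \<exists>w'. (u, w') \<in> A' \<and> t w \<le> t w'"
  shows "hgt_consistent (V', A') t"
proof -
  note types = degree_preserving_node_types[OF sub deg]
  have "t u \<le> t v \<and> (t u = t v \<longrightarrow> is_reticulation (V', A') v)" if "(u, v) \<in> A'" for u v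
  proof (cases "(u, v) \<in> A")
    case True
    moreover have "v \<in> V'"
      using that arcs by blast
    ultimately show ?thesis
      using label_mono label_eq_reticulation types(3) by blast
  next
    case False
    then show ?thesis
      using new[OF that] by simp
  qed
  moreover have "\<exists>v. (u, v) \<in> A' \<and> t u < t v" if "internal (V', A') u" for u
  proof -
    have "u \<in> V'" "internal (V, A) u"
      using that sub by (auto simp: internal_def types)
    then obtain v where "(u, v) \<in> A" "t u < t v"
      using internal_later_child by blast
    with lost[OF \<open>u \<in> V'\<close>] show ?thesis
      by (cases "(u, v) \<in> A'") (auto intro: less_le_trans)
  qed
  moreover have "(t u = t r) \<noteq> (t v = t r)"
    if "is_reticulation (V', A') r" "u \<noteq> v" "(u, r) \<in> A'" "(v, r) \<in> A'" for r u v
  proof -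
    have "is_reticulation (V, A) r"
      using that(1) by (simp add: types)
    with that new have "(u, r) \<in> A" "(v, r) \<in> A"
      by blast+
    with hgt \<open>is_reticulation (V, A) r\<close> \<open>u \<noteq> v\<close> show ?thesis
      unfolding hgt_consistent_def snd_conv by blast
  qed
  ultimately show ?thesis
    unfolding hgt_consistent_def snd_conv by blast
qed

end

definition bypass_arcs :: "'a set \<Rightarrow> ('a \<Rightarrow> 'a) \<Rightarrow> ('a \<times> 'a) set \<Rightarrow> ('a \<times> 'a) set" where
  "bypass_arcs D \<rho> A = {(a, \<rho> b) | a b. (a, b) \<in> A \<and> a \<notin> D}"

text \<open>Reducing a cherry \<open>(x, y)\<close> with parent \<open>p\<close> deletes \<open>D = {x, p}\<close>; reducing a reticulated
  cherry \<open>(x, y)\<close> deletes the reticulation \<open>r\<close> above \<open>x\<close> and the parent \<open>s\<close> of \<open>y\<close>. In both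
  cases every arc entering \<open>D\<close> is redirected to the leaf \<open>\<rho> d\<close> through which \<open>D\<close> is left.\<close>

locale network_bypass = binary_network +
  fixes D :: "'a set" and \<rho> :: "'a \<Rightarrow> 'a"
  assumes outside_fixed: "b \<notin> D \<Longrightarrow> \<rho> b = b"
    and entry_arc: "(a, d) \<in> A \<Longrightarrow> a \<notin> D \<Longrightarrow> d \<in> D \<Longrightarrow> (d, \<rho> d) \<in> A \<and> \<rho> d \<notin> D"
    and exit_arc: "(d, w) \<in> A \<Longrightarrow> d \<in> D \<Longrightarrow> w \<notin> D \<Longrightarrow>
      w = \<rho> d \<and> is_leaf (V, A) w \<and> card (parents A d - D) = 1"
    and root_outside: "is_root (V, A) r \<Longrightarrow> r \<notin> D"
begin

lemma mem_bypass_arcs: "(a, c) \<in> bypass_arcs D \<rho> A \<longleftrightarrow> a \<notin> D \<and> (\<exists>b. (a, b) \<in> A \<and> c = \<rho> b)"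
  by (auto simp: bypass_arcs_def)

lemma entry_redirect_leaf:
  assumes "(a, d) \<in> A" "a \<notin> D" "d \<in> D"
  shows "(d, \<rho> d) \<in> A" "is_leaf (V, A) (\<rho> d)" "parents A (\<rho> d) = {d}"
proof -
  show "(d, \<rho> d) \<in> A"
    using entry_arc[OF assms] by blast
  then show "is_leaf (V, A) (\<rho> d)"
    using entry_arc[OF assms] exit_arc assms(3) by blast
  then show "parents A (\<rho> d) = {d}"
    using \<open>(d, \<rho> d) \<in> A\<close> by (rule leaf_parents)
qed

lemma bypass_arcs_iff:
  "(a, c) \<in> bypass_arcs D \<rho> A \<longleftrightarrow>
    a \<notin> D \<and> ((a, c) \<in> A \<and> c \<notin> D \<or> (\<exists>d \<in> D. (a, d) \<in> A \<and> c = \<rho> d))"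
  unfolding mem_bypass_arcs using outside_fixed by metis

lemma bypass_arcE:
  assumes "(a, c) \<in> bypass_arcs D \<rho> A"
  obtains "a \<notin> D" "c \<notin> D" "(a, c) \<in> A"
    | d where "a \<notin> D" "d \<in> D" "(a, d) \<in> A" "c = \<rho> d"
  using assms unfolding bypass_arcs_iff by blast

lemma bypass_arcs_subset: "bypass_arcs D \<rho> A \<subseteq> (V - D) \<times> (V - D)"
proof (rule subrelI)
  fix a c
  assume "(a, c) \<in> bypass_arcs D \<rho> A"
  then show "(a, c) \<in> (V - D) \<times> (V - D)"
    by (cases rule: bypass_arcE) (use entry_arc arc_source arc_target in blast)+
qed

lemma bypass_arcs_trancl: "bypass_arcs D \<rho> A \<subseteq> A\<^sup>+"
proof (rule subrelI)
  fix a c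
  assume "(a, c) \<in> bypass_arcs D \<rho> A"
  then show "(a, c) \<in> A\<^sup>+"
    by (cases rule: bypass_arcE) (use entry_arc in \<open>blast intro: trancl_into_trancl\<close>)+
qed

lemma bypass_outdeg:
  assumes "v \<notin> D"
  shows "outdeg (bypass_arcs D \<rho> A) v = outdeg A v"
proof -
  have children: "children (bypass_arcs D \<rho> A) v = \<rho> ` children A v"
    using assms by (auto simp: mem_bypass_arcs)
  have "b = b'" if "(v, b) \<in> A" "(v, b') \<in> A" "\<rho> b = \<rho> b'" "b \<in> D" for b b'
  proof (cases "b' \<in> D")
    case True
    then show ?thesis
      using entry_redirect_leaf(3)[OF that(1) assms that(4)]
        entry_redirect_leaf(3)[OF that(2) assms True] that(3) by (metis singleton_inject)
  next
    case False
    then have "(v, \<rho> b) \<in> A"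
      using that outside_fixed by simp
    then show ?thesis
      using entry_redirect_leaf(3)[OF that(1) assms that(4)] assms that(4) by auto
  qed
  then have "inj_on \<rho> (children A v)"
    using outside_fixed by (intro inj_onI) (metis mem_children)
  then show ?thesis
    unfolding outdeg_def children by (rule card_image)
qed

lemma parents_bypass_redirected:
  assumes "(d, v) \<in> A" "d \<in> D" "v \<notin> D"
  shows "parents (bypass_arcs D \<rho> A) v = parents A d - D"
proof (rule set_eqI, rule iffI)
  have v: "v = \<rho> d" "is_leaf (V, A) v"
    using exit_arc assms by blast+
  fix a
  assume "a \<in> parents (bypass_arcs D \<rho> A) v"
  then have "(a, v) \<in> bypass_arcs D \<rho> A"
    by simp
  then show "a \<in> parents A d - D"
  proof (cases rule: bypass_arcE)
    case 1
    then show ?thesis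
      using leaf_parents[OF v(2) assms(1)] assms(2) by auto
  next
    case (2 d')
    then have "parents A v = {d'}"
      using entry_redirect_leaf(3) by blast
    with 2 show ?thesis
      using assms(1) by auto
  qed
next
  fix a
  assume "a \<in> parents A d - D"
  then show "a \<in> parents (bypass_arcs D \<rho> A) v"
    using exit_arc assms by (auto simp: mem_bypass_arcs)
qed

lemma parents_bypass_untouched:
  assumes "v \<notin> D" and "\<forall>d \<in> D. (d, v) \<notin> A"
  shows "parents (bypass_arcs D \<rho> A) v = parents A v"
proof (rule set_eqI, rule iffI)
  fix a
  assume "a \<in> parents (bypass_arcs D \<rho> A) v"
  then show "a \<in> parents A v"
    using assms entry_arc by (auto elim!: bypass_arcE)
next
  fix a
  assume "a \<in> parents A v"
  then show "a \<in> parents (bypass_arcs D \<rho> A) v"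
    using assms outside_fixed by (force simp: mem_bypass_arcs)
qed

lemma bypass_indeg:
  assumes "v \<notin> D"
  shows "indeg (bypass_arcs D \<rho> A) v = indeg A v"
proof (cases "\<exists>d \<in> D. (d, v) \<in> A")
  case True
  then obtain d where "d \<in> D" "(d, v) \<in> A"
    by blast
  then have "is_leaf (V, A) v" "card (parents A d - D) = 1"
    using exit_arc assms by blast+
  with parents_bypass_redirected[OF \<open>(d, v) \<in> A\<close> \<open>d \<in> D\<close> assms] show ?thesis
    by (simp add: indeg_def is_leaf_def)
next
  case False
  then show ?thesis
    using parents_bypass_untouched[OF assms] by (simp add: indeg_def)
qed

lemma bypass_hgt_network:
  assumes "hgt_consistent (V, A) t"
  shows "hgt_network (V - D) (bypass_arcs D \<rho> A) t"
proof -
  interpret hgt_network V A t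
    using assms by unfold_locales
  have deg: "\<And>v. v \<in> V - D \<Longrightarrow> indeg (bypass_arcs D \<rho> A) v = indeg A v
      \<and> outdeg (bypass_arcs D \<rho> A) v = outdeg A v"
    using bypass_indeg bypass_outdeg by blast
  have root: "\<exists>r \<in> V - D. is_root (V, A) r"
    using root_exists root_outside by (auto simp: is_root_def)
  have new: "t u < t w \<and> \<not> is_reticulation (V, A) w"
    if new_arc: "(u, w) \<in> bypass_arcs D \<rho> A" "(u, w) \<notin> A" for u w
  proof -
    obtain b where "u \<notin> D" "(u, b) \<in> A" "w = \<rho> b"
      using new_arc(1) unfolding mem_bypass_arcs by blast
    moreover have "b \<in> D"
      using calculation new_arc(2) outside_fixed by metis
    ultimately have "t u \<le> t b" "t b < t w" "is_leaf (V, A) w"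
      using label_mono label_less_leaf entry_redirect_leaf by blast+
    then show ?thesis
      by (auto simp: is_leaf_def is_reticulation_def)
  qed
  have lost: "\<exists>w'. (u, w') \<in> bypass_arcs D \<rho> A \<and> t w \<le> t w'"
    if "u \<in> V - D" "(u, w) \<in> A" "(u, w) \<notin> bypass_arcs D \<rho> A" for u w
  proof -
    have "w \<in> D"
      using that outside_fixed by (force simp: mem_bypass_arcs)
    then have "(u, \<rho> w) \<in> bypass_arcs D \<rho> A" "t w \<le> t (\<rho> w)"
      using that entry_arc label_mono by (auto simp: mem_bypass_arcs)
    then show ?thesis
      by blast
  qed
  show ?thesis
    using binary_if_degree_preserving[OF _ bypass_arcs_subset bypass_arcs_trancl deg root]
      hgt_consistent_if_degree_preserving[OF _ bypass_arcs_subset deg new lost]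
    by (simp add: Diff_subset hgt_network.intro binary_network.intro hgt_network_axioms.intro)
qed

end

context binary_network
begin

lemma cherry_neighbourhood:
  assumes "is_cherry (V, A) x y"
  obtains p g where "is_leaf (V, A) x" "is_leaf (V, A) y" "x \<noteq> y"
    "parents A x = {p}" "parents A y = {p}" "children A p = {x, y}" "parents A p = {g}"
proof -
  obtain p where "is_leaf (V, A) x" "is_leaf (V, A) y" "x \<noteq> y" "(p, x) \<in> A" "(p, y) \<in> A"
    using assms by (auto simp: is_cherry_def)
  with leaf_parents two_children_node that show ?thesis
    by metis
qed

lemma ret_cherry_neighbourhood:
  assumes "is_ret_cherry (V, A) x y"
  obtains r s q g where "is_leaf (V, A) x" "is_leaf (V, A) y" "x \<noteq> y"
    "parents A x = {r}" "children A r = {x}" "parents A r = {s, q}" "q \<noteq> s"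
    "parents A y = {s}" "children A s = {r, y}" "parents A s = {g}" "g \<noteq> r"
proof -
  obtain s where x: "is_leaf (V, A) x" and y: "is_leaf (V, A) y" and "x \<noteq> y"
    and r: "is_reticulation (V, A) (par (V, A) x)"
    and sr: "(s, par (V, A) x) \<in> A" and sy: "(s, y) \<in> A"
    using assms by (auto simp: is_ret_cherry_def)
  define r where "r = par (V, A) x"
  obtain p where "parents A x = {p}"
    using x by (auto simp: is_leaf_def indeg_def card_1_singleton_iff)
  then have px: "parents A x = {r}"
    unfolding r_def by (simp add: par_eq)
  obtain c where "children A r = {c}"
    using reticulation_arcs(1) r unfolding r_def by blast
  with px have rx: "children A r = {x}"
    by (metis arc_from_iff arc_into_iff singletonD singletonI)
  obtain a b where "a \<noteq> b" "parents A r = {a, b}"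
    using reticulation_arcs(2) r unfolding r_def by blast
  moreover have "s \<in> parents A r"
    using sr unfolding r_def by simp
  ultimately obtain q where "parents A r = {s, q}" "q \<noteq> s"
    by auto
  moreover have "r \<noteq> y"
    using r y unfolding r_def by (auto simp: is_leaf_def is_reticulation_def)
  then obtain g where "children A s = {r, y}" "parents A s = {g}"
    using two_children_node[OF sr[folded r_def] sy] by blast
  moreover have "g \<noteq> r"
  proof
    assume "g = r"
    with \<open>parents A s = {g}\<close> have "s \<in> children A r"
      by auto
    with rx have "s = x"
      by simp
    with sr show False
      using leaf_no_child[OF x] by blast
  qed
  ultimately show ?thesis
    using that x y \<open>x \<noteq> y\<close> px rx leaf_parents[OF y sy] by metis
qed

lemma reduce_pair_cherry_eq:
  assumes "is_cherry (V, A) x y" "parents A x = {p}" "children A p = {x, y}" "parents A p = {g}"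
  shows "reduce_pair (V, A) (x, y) = (V - {x} - {p}, A - {(p, x)} - {(g, p), (p, y)} \<union> {(g, y)})"
    (is "_ = ?reduced")
proof -
  have "(p, x) \<in> A" "x \<noteq> y"
    using assms(1,3) by (auto simp: is_cherry_def)
  then have "p \<noteq> x"
    using no_self_arc by blast
  then have "p \<in> V - {x}"
    using arc_source \<open>(p, x) \<in> A\<close> by blast
  moreover have "parents (A - {(p, x)}) p = {g}" "children (A - {(p, x)}) p = {y}"
    using assms(3,4) \<open>x \<noteq> y\<close> \<open>p \<noteq> x\<close> by (auto simp: set_eq_iff)
  ultimately have "suppress_if p (V - {x}, A - {(p, x)}) = ?reduced"
    by (rule suppress_if_eq)
  with assms(1,2) show ?thesis
    by (simp add: reduce_pair_def par_eq)
qed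

lemma cherry_reduction_bypass:
  assumes cherry: "is_cherry (V, A) x y"
  obtains D \<rho> where "network_bypass V A D \<rho>" "D \<inter> V \<noteq> {}"
    "reduce_pair (V, A) (x, y) = (V - D, bypass_arcs D \<rho> A)"
proof -
  obtain p g where x: "is_leaf (V, A) x" and y: "is_leaf (V, A) y" and "x \<noteq> y"
    and px: "parents A x = {p}" and py: "parents A y = {p}"
    and cp: "children A p = {x, y}" and gp: "parents A p = {g}"
    using cherry_neighbourhood[OF cherry] by blast
  note arcs = arc_into_iff[OF px] arc_into_iff[OF py] arc_from_iff[OF cp] arc_into_iff[OF gp]
    leaf_no_child[OF x] leaf_no_child[OF y]
  have "(p, x) \<in> A" "(p, y) \<in> A" "(g, p) \<in> A"
    by (simp_all add: arcs)
  then have "p \<noteq> x" "p \<noteq> y" "g \<noteq> p" "g \<noteq> x" "g \<noteq> y" "p \<in> V"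
    using no_self_arc leaf_no_child[OF x] leaf_no_child[OF y] arc_source by metis+
  note distinct = this(1-5) \<open>x \<noteq> y\<close>
  define \<rho> where "\<rho> v = (if v = p then y else v)" for v
  have "network_bypass V A {x, p} \<rho>"
  proof (intro network_bypass.intro network_bypass_axioms.intro binary_network_axioms)
    show "w = \<rho> d \<and> is_leaf (V, A) w \<and> card (parents A d - {x, p}) = 1"
      if "(d, w) \<in> A" "d \<in> {x, p}" "w \<notin> {x, p}" for d w
    proof -
      have "d = p" "w = y"
        using that arcs by auto
      then show ?thesis
        using y distinct by (simp add: \<rho>_def gp)
    qed
    show "is_root (V, A) r \<Longrightarrow> r \<notin> {x, p}" for r
      using root_no_parent arcs by blast
  qed (use arcs distinct y in \<open>auto simp: \<rho>_def\<close>)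
  moreover have "A - {(p, x)} - {(g, p), (p, y)} \<union> {(g, y)} = bypass_arcs {x, p} \<rho> A"
    using distinct
    by (auto simp: set_eq_iff network_bypass.bypass_arcs_iff[OF calculation] \<rho>_def arcs)
  moreover have "V - {x} - {p} = V - {x, p}"
    by blast
  moreover have "{x, p} \<inter> V \<noteq> {}"
    using \<open>p \<in> V\<close> by blast
  ultimately show ?thesis
    using that reduce_pair_cherry_eq[OF cherry px cp gp] by metis
qed

lemma reduce_pair_ret_cherry_eq:
  assumes ret_cherry: "is_ret_cherry (V, A) x y"
    and px: "parents A x = {r}" and rx: "children A r = {x}" and sqr: "parents A r = {s, q}"
    and "q \<noteq> s" and sy: "parents A y = {s}" and sry: "children A s = {r, y}"
    and gs: "parents A s = {g}" and "g \<noteq> r"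
  shows "reduce_pair (V, A) (x, y) = (V - {s} - {r},
    A - {(s, r)} - {(g, s), (s, y)} \<union> {(g, y)} - {(q, r), (r, x)} \<union> {(q, x)})"
    (is "_ = ?reduced")
proof -
  note arcs = arc_into_iff[OF px] arc_from_iff[OF rx] arc_into_iff[OF sqr]
    arc_into_iff[OF sy] arc_from_iff[OF sry] arc_into_iff[OF gs]
  have y: "is_leaf (V, A) y" and "x \<noteq> y"
    using ret_cherry by (auto simp: is_ret_cherry_def)
  have "(r, x) \<in> A" "(s, r) \<in> A" "(q, r) \<in> A" "(g, s) \<in> A" "(s, y) \<in> A"
    by (simp_all add: arcs)
  then have "s \<noteq> r" "r \<noteq> y" "g \<noteq> s" "q \<noteq> r" "r \<in> V" "s \<in> V"
    using no_self_arc leaf_no_child[OF y] arc_source by metis+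
  note distinct = this(1-4) \<open>g \<noteq> r\<close> \<open>q \<noteq> s\<close> \<open>x \<noteq> y\<close>
  have "\<not> is_cherry (V, A) x y"
    using distinct by (auto simp: is_cherry_def arcs)
  moreover have "suppress_if s (V, A - {(s, r)}) =
      (V - {s}, A - {(s, r)} - {(g, s), (s, y)} \<union> {(g, y)})"
    using \<open>s \<in> V\<close> distinct by (intro suppress_if_eq) (auto simp: set_eq_iff arcs)
  moreover have "suppress_if r (V - {s}, A - {(s, r)} - {(g, s), (s, y)} \<union> {(g, y)}) = ?reduced"
    using \<open>r \<in> V\<close> distinct by (intro suppress_if_eq) (auto simp: set_eq_iff arcs)
  ultimately show ?thesis
    using ret_cherry by (simp add: reduce_pair_def par_eq px sy)
qed

lemma ret_cherry_reduction_bypass: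
  assumes ret_cherry: "is_ret_cherry (V, A) x y"
  obtains D \<rho> where "network_bypass V A D \<rho>" "D \<inter> V \<noteq> {}"
    "reduce_pair (V, A) (x, y) = (V - D, bypass_arcs D \<rho> A)"
proof -
  obtain r s q g where x: "is_leaf (V, A) x" and y: "is_leaf (V, A) y" and "x \<noteq> y"
    and px: "parents A x = {r}" and rx: "children A r = {x}" and sqr: "parents A r = {s, q}"
    and "q \<noteq> s" and sy: "parents A y = {s}" and sry: "children A s = {r, y}"
    and gs: "parents A s = {g}" and "g \<noteq> r"
    using ret_cherry_neighbourhood[OF ret_cherry] by blast
  note arcs = arc_into_iff[OF px] arc_from_iff[OF rx] arc_into_iff[OF sqr]
    arc_into_iff[OF sy] arc_from_iff[OF sry] arc_into_iff[OF gs]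
    leaf_no_child[OF x] leaf_no_child[OF y]
  have "(r, x) \<in> A" "(s, r) \<in> A" "(q, r) \<in> A" "(g, s) \<in> A" "(s, y) \<in> A"
    by (simp_all add: arcs)
  then have "s \<noteq> r" "r \<noteq> y" "g \<noteq> s" "q \<noteq> r" "s \<noteq> x" "s \<noteq> y" "r \<noteq> x" "q \<noteq> x"
    "r \<in> V"
    using no_self_arc leaf_no_child[OF x] leaf_no_child[OF y] arc_source by metis+
  note distinct = this(1-8) \<open>g \<noteq> r\<close> \<open>q \<noteq> s\<close> \<open>x \<noteq> y\<close>
  define \<rho> where "\<rho> v = (if v = s then y else if v = r then x else v)" for v
  have "network_bypass V A {s, r} \<rho>"
  proof (intro network_bypass.intro network_bypass_axioms.intro binary_network_axioms)
    show "w = \<rho> d \<and> is_leaf (V, A) w \<and> card (parents A d - {s, r}) = 1"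
      if "(d, w) \<in> A" "d \<in> {s, r}" "w \<notin> {s, r}" for d w
    proof -
      have "d = s \<and> w = y \<or> d = r \<and> w = x"
        using that arcs by auto
      moreover have "parents A s - {s, r} = {g}" "parents A r - {s, r} = {q}"
        using distinct by (auto simp: gs sqr)
      ultimately show ?thesis
        using x y distinct by (auto simp: \<rho>_def)
    qed
    show "is_root (V, A) v \<Longrightarrow> v \<notin> {s, r}" for v
      using root_no_parent \<open>(g, s) \<in> A\<close> \<open>(q, r) \<in> A\<close> by blast
  qed (use arcs distinct in \<open>auto simp: \<rho>_def\<close>)
  moreover have "A - {(s, r)} - {(g, s), (s, y)} \<union> {(g, y)} - {(q, r), (r, x)} \<union> {(q, x)}
      = bypass_arcs {s, r} \<rho> A"
    using distinct
    by (auto simp: set_eq_iff network_bypass.bypass_arcs_iff[OF calculation] \<rho>_def arcs)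
  moreover have "V - {s} - {r} = V - {s, r}" "{s, r} \<inter> V \<noteq> {}"
    using \<open>r \<in> V\<close> by blast+
  ultimately show ?thesis
    using that reduce_pair_ret_cherry_eq[OF ret_cherry px rx sqr \<open>q \<noteq> s\<close> sy sry gs \<open>g \<noteq> r\<close>] by metis
qed

end

lemma hgt_network_orchard: "hgt_network V A t \<Longrightarrow> orchard (V, A)"
proof (induction "card V" arbitrary: V A rule: less_induct)
  case less
  interpret hgt_network V A t
    by (fact less.prems)
  show ?case
  proof (cases "\<exists>u \<in> V. internal (V, A) u \<and> \<not> is_root (V, A) u")
    case False
    then show ?thesis
      using orchard_if_internal_only_root by blast
  next
    case True
    then obtain x y where "is_cherry (V, A) x y \<or> is_ret_cherry (V, A) x y"
      using reducible_pair_exists by blast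
    then obtain D \<rho> where bypass: "network_bypass V A D \<rho>" "D \<inter> V \<noteq> {}"
      and reduced: "reduce_pair (V, A) (x, y) = (V - D, bypass_arcs D \<rho> A)"
      using cherry_reduction_bypass ret_cherry_reduction_bypass by metis
    have "card (V - D) < card V"
      using finite_nodes bypass(2) by (intro psubset_card_mono) auto
    moreover have "hgt_network (V - D) (bypass_arcs D \<rho> A) t"
      using network_bypass.bypass_hgt_network[OF bypass(1) hgt] .
    ultimately have "orchard (reduce_pair (V, A) (x, y))"
      using less.hyps reduced by simp
    then show ?thesis
      by (rule orchard_if_reduce_pair_orchard)
  qed
qed

theorem mainTheorem4:
  fixes N :: "'a graph"
  assumes "is_binary N"
    and "\<exists>t. hgt_consistent N t"
  shows "orchard N"
proof -
  obtain V A t where "N = (V, A)" and "hgt_consistent (V, A) t"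
    using assms(2) by (metis surj_pair)
  with assms(1) have "hgt_network V A t"
    by (simp add: hgt_network_def binary_network_def hgt_network_axioms_def)
  with \<open>N = (V, A)\<close> show ?thesis
    using hgt_network_orchard by blast
qed

end
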